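(* Let $\beta:\mathbb R\to\mathbb R$ be piecewise continuous with $\beta(-t)^2=\beta(t)^2$ for all $t$, let $\Lambda(t)=\begin{pmatrix}0&1\\-\beta(t)^2&0\end{pmatrix}$, let $b(t,s)$ solve $\frac{\partial}{\partial t}b(t,s)=\Lambda(t)b(t,s)$, $b(s,s)=\mathbb 1$, and set $b(t)=b(t,-t)$ with entries $b_{ij}(t)$. If $|\mathrm{Tr}\,b(t)|>2$ for some $t\ge0$, then $b_{12}(t)\neq0$ and $b_{21}(t)\neq0$. *)

theory Defs
  imports "HOL-Analysis.Analysis"
begin

definition piecewise_continuous :: "(real \<Rightarrow> real) \<Rightarrow> bool" where
  "piecewise_continuous f \<longleftrightarrow>
     (\<forall>a b. finite {x \<in> {a..b}. \<not> isCont f x}) \<and>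
     (\<forall>x. (\<exists>l. (f \<longlongrightarrow> l) (at_left x)) \<and> (\<exists>l. (f \<longlongrightarrow> l) (at_right x)))"

definition Lam :: "(real \<Rightarrow> real) \<Rightarrow> real \<Rightarrow> real^2^2" where
  "Lam \<beta> t = vector [vector [0, 1], vector [- ((\<beta> t)^2), 0]]"

end

theory Submission
  imports Defs
begin

text \<open>For a solution \<open>B(\<tau>) = b(\<tau>, -t)\<close>, both columns \<open>(x, y)\<close> solve Hill's equation
\<open>x' = y, y' = -q x\<close> with \<open>q = \<beta>\<^sup>2\<close>, away from the discontinuities of \<open>\<beta>\<close>. The Wronskian of two
solutions is constant, so \<open>det B(t) = det B(-t) = 1\<close>. Since \<open>q\<close> is even,
\<open>\<tau> \<mapsto> (x(-\<tau>), -y(-\<tau>))\<close> is again a solution; the constant Wronskian of the first column with the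
reflected second column gives \<open>B\<^sub>1\<^sub>1(t) = B\<^sub>2\<^sub>2(t)\<close>. Then \<open>B\<^sub>1\<^sub>1(t)\<^sup>2 - 1 = B\<^sub>1\<^sub>2(t) B\<^sub>2\<^sub>1(t)\<close>, and
\<open>|tr B(t)| > 2\<close> makes the left side positive.\<close>

definition solves_hill :: "(real \<Rightarrow> real) \<Rightarrow> real set \<Rightarrow> (real \<Rightarrow> real) \<Rightarrow> (real \<Rightarrow> real) \<Rightarrow> bool"
  where "solves_hill q K x y \<longleftrightarrow>
    continuous_on UNIV x \<and> continuous_on UNIV y \<and>
    (\<forall>\<tau>. \<tau> \<notin> K \<longrightarrow> (x has_real_derivative y \<tau>) (at \<tau>) \<and> (y has_real_derivative - q \<tau> * x \<tau>) (at \<tau>))"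

lemma DERIV_zero_off_finite_imp_eq:
  fixes f :: "real \<Rightarrow> real"
  assumes "a \<le> b" "finite K" "continuous_on {a..b} f"
    and "\<And>x. x \<in> {a..b} - K \<Longrightarrow> (f has_real_derivative 0) (at x)"
  shows "f b = f a"
proof (rule has_derivative_zero_unique_strong_interval[of K a b f])
  fix x assume "x \<in> {a..b} - K"
  then have "(f has_real_derivative 0) (at x within {a..b})"
    using assms(4) has_field_derivative_at_within by blast
  then show "(f has_derivative (\<lambda>h. 0)) (at x within {a..b})"
    by (simp add: has_field_derivative_def lambda_zero)
qed (use assms in auto)

lemma wronskian_hill_const:
  assumes "solves_hill q K x\<^sub>1 y\<^sub>1" "solves_hill q L x\<^sub>2 y\<^sub>2"
    and "a \<le> b" "finite (K \<inter> {a..b})" "finite (L \<inter> {a..b})"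
  shows "x\<^sub>1 b * y\<^sub>2 b - y\<^sub>1 b * x\<^sub>2 b = x\<^sub>1 a * y\<^sub>2 a - y\<^sub>1 a * x\<^sub>2 a"
proof (rule DERIV_zero_off_finite_imp_eq[where f = "\<lambda>\<tau>. x\<^sub>1 \<tau> * y\<^sub>2 \<tau> - y\<^sub>1 \<tau> * x\<^sub>2 \<tau>"])
  show "finite ((K \<union> L) \<inter> {a..b})"
    using assms(4,5) by (simp add: Int_Un_distrib2)
  show "continuous_on {a..b} (\<lambda>\<tau>. x\<^sub>1 \<tau> * y\<^sub>2 \<tau> - y\<^sub>1 \<tau> * x\<^sub>2 \<tau>)"
    using assms(1,2) unfolding solves_hill_def
    by (intro continuous_intros; blast intro: continuous_on_subset)
  fix \<tau> assume "\<tau> \<in> {a..b} - (K \<union> L) \<inter> {a..b}"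
  then have "\<tau> \<notin> K" "\<tau> \<notin> L" by auto
  with assms(1,2) have
    "((\<lambda>\<tau>. x\<^sub>1 \<tau> * y\<^sub>2 \<tau> - y\<^sub>1 \<tau> * x\<^sub>2 \<tau>) has_real_derivative
       (x\<^sub>1 \<tau> * (- q \<tau> * x\<^sub>2 \<tau>) + y\<^sub>1 \<tau> * y\<^sub>2 \<tau>) - (y\<^sub>1 \<tau> * y\<^sub>2 \<tau> + (- q \<tau> * x\<^sub>1 \<tau>) * x\<^sub>2 \<tau>)) (at \<tau>)"
    unfolding solves_hill_def by (intro DERIV_diff DERIV_mult') auto
  then show "((\<lambda>\<tau>. x\<^sub>1 \<tau> * y\<^sub>2 \<tau> - y\<^sub>1 \<tau> * x\<^sub>2 \<tau>) has_real_derivative 0) (at \<tau>)"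
    by (simp add: algebra_simps)
qed (use assms(3) in simp)

lemma solves_hill_reflect:
  assumes "solves_hill q K x y" and even: "\<And>\<tau>. q (- \<tau>) = q \<tau>"
  shows "solves_hill q (uminus ` K) (\<lambda>\<tau>. x (- \<tau>)) (\<lambda>\<tau>. - y (- \<tau>))"
  unfolding solves_hill_def
proof (intro conjI allI impI)
  have cont: "continuous_on UNIV x" "continuous_on UNIV y"
    using assms(1) unfolding solves_hill_def by auto
  show "continuous_on UNIV (\<lambda>\<tau>. x (- \<tau>))" "continuous_on UNIV (\<lambda>\<tau>. - y (- \<tau>))"
    by (intro continuous_intros continuous_on_compose2[OF cont(1)] continuous_on_compose2[OF cont(2)];
        simp)+
  fix \<tau> assume "\<tau> \<notin> uminus ` K"
  then have "- \<tau> \<notin> K" by force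
  with assms(1) have dx: "(x has_real_derivative y (- \<tau>)) (at (- \<tau>))"
    and dy: "(y has_real_derivative - q (- \<tau>) * x (- \<tau>)) (at (- \<tau>))"
    unfolding solves_hill_def by auto
  show "((\<lambda>\<tau>. x (- \<tau>)) has_real_derivative - y (- \<tau>)) (at \<tau>)"
    using DERIV_chain2[OF dx DERIV_minus[OF DERIV_ident]] by simp
  show "((\<lambda>\<tau>. - y (- \<tau>)) has_real_derivative - q \<tau> * x (- \<tau>)) (at \<tau>)"
    using DERIV_minus[OF DERIV_chain2[OF dy DERIV_minus[OF DERIV_ident]]] by (simp add: even)
qed

lemma has_vector_derivative_matrix_entry:
  assumes "(F has_vector_derivative (M :: real^'n^'m)) (at u)"
  shows "((\<lambda>\<tau>. F \<tau> $ i $ j) has_real_derivative M $ i $ j) (at u)"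
proof -
  have "bounded_linear (\<lambda>A :: real^'n^'m. A $ i $ j)"
    using bounded_linear_compose[OF bounded_linear_vec_nth bounded_linear_vec_nth] .
  from bounded_linear.has_vector_derivative[OF this assms] show ?thesis
    by (simp add: has_real_derivative_iff_has_vector_derivative)
qed

lemma Lam_mult_rows:
  "(Lam \<beta> u ** M) $ 1 $ j = M $ 2 $ j"
  "(Lam \<beta> u ** M) $ 2 $ j = - (\<beta> u)\<^sup>2 * M $ 1 $ j"
  by (simp_all add: Lam_def matrix_matrix_mult_def sum_2)

lemma column_solves_hill:
  assumes cont: "continuous_on UNIV (\<lambda>\<tau>. b \<tau> s)"
    and ode: "\<And>u. isCont \<beta> u \<Longrightarrow>
                ((\<lambda>\<tau>. b \<tau> s) has_vector_derivative (Lam \<beta> u ** b u s)) (at u)"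
  shows "solves_hill (\<lambda>u. (\<beta> u)\<^sup>2) {u. \<not> isCont \<beta> u} (\<lambda>\<tau>. b \<tau> s $ 1 $ j) (\<lambda>\<tau>. b \<tau> s $ 2 $ j)"
  unfolding solves_hill_def
proof (intro conjI allI impI)
  show "continuous_on UNIV (\<lambda>\<tau>. b \<tau> s $ 1 $ j)" "continuous_on UNIV (\<lambda>\<tau>. b \<tau> s $ 2 $ j)"
    by (intro continuous_on_component cont)+
  fix u assume "u \<notin> {u. \<not> isCont \<beta> u}"
  then have "((\<lambda>\<tau>. b \<tau> s $ i $ j) has_real_derivative (Lam \<beta> u ** b u s) $ i $ j) (at u)" for i
    using has_vector_derivative_matrix_entry[OF ode] by simp
  from this[of 1] this[of 2] show "((\<lambda>\<tau>. b \<tau> s $ 1 $ j) has_real_derivative b u s $ 2 $ j) (at u)"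
    and "((\<lambda>\<tau>. b \<tau> s $ 2 $ j) has_real_derivative - (\<beta> u)\<^sup>2 * b u s $ 1 $ j) (at u)"
    by (simp_all only: Lam_mult_rows)
qed

lemma offdiag_nonzero_if_symmetric_trace_gt_2:
  fixes B :: "real^2^2"
  assumes "B $ 1 $ 1 * B $ 2 $ 2 - B $ 2 $ 1 * B $ 1 $ 2 = 1"
    and "B $ 1 $ 1 = B $ 2 $ 2" and "\<bar>trace B\<bar> > 2"
  shows "B $ 1 $ 2 \<noteq> 0 \<and> B $ 2 $ 1 \<noteq> 0"
proof -
  have "\<bar>B $ 1 $ 1\<bar> > 1"
    using assms(2,3) by (simp add: trace_def sum_2)
  then have "B $ 1 $ 1 * B $ 1 $ 1 > 1"
    by (metis abs_mult_self_eq less_1_mult)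
  then show ?thesis
    using assms(1,2) by auto
qed

theorem mainTheorem5:
  fixes \<beta> :: "real \<Rightarrow> real" and b :: "real \<Rightarrow> real \<Rightarrow> real^2^2" and t :: real
  assumes pc: "piecewise_continuous \<beta>"
    and sym: "\<forall>u. (\<beta> (- u))^2 = (\<beta> u)^2"
    and init: "\<forall>s. b s s = mat 1"
    and cont: "\<forall>s. continuous_on UNIV (\<lambda>\<tau>. b \<tau> s)"
    and ode: "\<forall>s u. isCont \<beta> u \<longrightarrow>
                 ((\<lambda>\<tau>. b \<tau> s) has_vector_derivative (Lam \<beta> u ** b u s)) (at u)"
    and t: "t \<ge> 0"
    and tr: "\<bar>trace (b t (- t))\<bar> > 2"
  shows "b t (- t) $ 1 $ 2 \<noteq> 0 \<and> b t (- t) $ 2 $ 1 \<noteq> 0"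
proof -
  define K where "K = {u. \<not> isCont \<beta> u}"
  define x where "x j \<tau> = b \<tau> (- t) $ 1 $ j" for j \<tau>
  define y where "y j \<tau> = b \<tau> (- t) $ 2 $ j" for j \<tau>
  have col: "solves_hill (\<lambda>u. (\<beta> u)\<^sup>2) K (x j) (y j)" for j
    unfolding K_def x_def y_def using cont ode by (intro column_solves_hill) auto
  have "finite (K \<inter> {-t..t})"
    using pc unfolding piecewise_continuous_def K_def
    by (auto intro: finite_subset[where B = "{u \<in> {-t..t}. \<not> isCont \<beta> u}"])
  then have fin: "finite (K \<inter> {-t..t})" "finite (uminus ` K \<inter> {-t..t})"
    by (auto intro: finite_subset[where B = "uminus ` (K \<inter> {-t..t})"])
  have at_start: "b (- t) (- t) $ i $ j = (if i = j then 1 else 0)" for i j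
    using init by (simp add: mat_def)
  have "x 1 t * y 2 t - y 1 t * x 2 t = 1"
    using wronskian_hill_const[OF col[of 1] col[of 2] _ fin(1) fin(1)] t
    by (simp add: x_def y_def at_start)
  moreover have "x 1 t = y 2 t"
  proof -
    have "(\<beta> (- u))\<^sup>2 = (\<beta> u)\<^sup>2" for u
      using sym by simp
    then have "solves_hill (\<lambda>u. (\<beta> u)\<^sup>2) (uminus ` K) (\<lambda>\<tau>. x 2 (- \<tau>)) (\<lambda>\<tau>. - y 2 (- \<tau>))"
      using solves_hill_reflect[OF col[of 2]] by blast
    from wronskian_hill_const[OF col[of 1] this _ fin] t show ?thesis
      by (simp add: x_def y_def at_start)
  qed
  ultimately show ?thesis
    using offdiag_nonzero_if_symmetric_trace_gt_2[OF _ _ tr] by (simp add: x_def y_def)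
qed

end
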